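(* Consider the two-period difference-in-differences setting with anticipation described in the context, and suppose: (i) (Sampling) $\{Y_{i0}(0,1), Y_{i0}(1,1), Y_{i0}(0), Y_{i1}(0), Y_{i1}(1), D_i, A_i\}_{i=1}^n$ are independent and identically distributed across $i$; (ii) $Y_{i0}(0)=Y_{i0}(0,1)$; (iii) (Parallel trends) $\mathbb{E}[g(Y_{i1}(0))-g(Y_{i0}(0))\mid D_i=1]=\mathbb{E}[g(Y_{i1}(0))-g(Y_{i0}(0))\mid D_i=0]$; (iv) $\mathbb{P}[A_i=1\mid D_i=1]\le \pi$ for a given $\pi\in(0,1)$; (v) $|\tau_g|\le|\mu_g|$. Let $m_g=\mathbb{E}[g(Y_{i1})-g(Y_{i0})\mid D_i=1]-\mathbb{E}[g(Y_{i1})-g(Y_{i0})\mid D_i=0]$. Then $\mu_g$ is partially identified via the closed interval \[\mu_g\in m_g\left[\min\left\{1,\frac{1}{1-\operatorname{sgn}(\tau_g\mu_g)\pi}\right\},\ \max\left\{1,\frac{1}{1-\operatorname{sgn}(\tau_g\mu_g)\pi}\right\}\right],\] i.e. $\mu_g=m_g c$ for some $c$ in the displayed interval of real numbers.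
   Context: There are two periods $t\in\{0,1\}$ and units $i=1,\dots,n$. Each unit has an observed binary treatment $D_i\in\{0,1\}$ (applied in period 1) and an unobserved binary anticipation status $A_i\in\{0,1\}$ in period 0 ($A_i=1$ means the unit anticipates). Potential outcomes: $Y_{i1}(d)$ for $d\in\{0,1\}$ in period 1; $Y_{i0}(0)$ in period 0 for untreated units; and $Y_{i0}(a,1)$, $a\in\{0,1\}$, the period-0 outcome of a unit that will be treated, with anticipation status $a$. Observed outcomes: $Y_{i1}=D_iY_{i1}(1)+(1-D_i)Y_{i1}(0)$ and $Y_{i0}=(1-D_i)Y_{i0}(0)+D_i[(1-A_i)Y_{i0}(0,1)+A_iY_{i0}(1,1)]$. Let $g$ be a known measurable real function with $\mathbb{E}|g(Y)|<\infty$ for the relevant outcomes. The parameter of interest is $\mu_g=\mathbb{E}[g(Y_{i1}(1))-g(Y_{i1}(0))\mid D_i=1]$, and the anticipatory effect is $\tau_g=\mathbb{E}[g(Y_{i0}(1,1))-g(Y_{i0}(0,1))\mid D_i=1,A_i=1]$. $\operatorname{sgn}$ denotes the sign function. *)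

theory Defs
  imports "HOL-Probability.Probability"
begin

definition cond_ev :: "'a measure \<Rightarrow> ('a \<Rightarrow> real) \<Rightarrow> ('a \<Rightarrow> bool) \<Rightarrow> real" where
  "cond_ev M X P =
     (\<integral>\<omega>. indicator {\<omega>\<in>space M. P \<omega>} \<omega> * X \<omega> \<partial>M) / measure M {\<omega>\<in>space M. P \<omega>}"

definition cond_prob :: "'a measure \<Rightarrow> ('a \<Rightarrow> bool) \<Rightarrow> ('a \<Rightarrow> bool) \<Rightarrow> real" where
  "cond_prob M Q P =
     measure M {\<omega>\<in>space M. Q \<omega> \<and> P \<omega>} / measure M {\<omega>\<in>space M. P \<omega>}"

definition obs_Y1 :: "bool \<Rightarrow> real \<Rightarrow> real \<Rightarrow> real" where
  "obs_Y1 d y11 y10 = (if d then y11 else y10)"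

definition obs_Y0 :: "bool \<Rightarrow> bool \<Rightarrow> real \<Rightarrow> real \<Rightarrow> real \<Rightarrow> real" where
  "obs_Y0 d a y00 y001 y011 = (if d then (if a then y011 else y001) else y00)"

definition unit_vec ::
  "real \<Rightarrow> real \<Rightarrow> real \<Rightarrow> real \<Rightarrow> real \<Rightarrow> bool \<Rightarrow> bool
     \<Rightarrow> real \<times> real \<times> real \<times> real \<times> real \<times> real \<times> real" where
  "unit_vec y001 y011 y00 y10 y11 d a = (y001, y011, y00, y10, y11, of_bool d, of_bool a)"

end

theory Submission
  imports Defs
begin

text \<open>On the treated units, by (ii), the observed change splits into the treatment effect, the
  untreated trend, and minus the anticipatory effect on the units that anticipate; on the
  untreated units it is the untreated trend. Parallel trends cancels the trends, so
  \<open>m = \<mu> - q \<tau>\<close> with \<open>q = P[A = 1 | D = 1] \<le> \<pi>\<close>. Writing \<open>\<tau> = r \<mu>\<close> with \<open>\<bar>r\<bar> \<le> 1\<close> gives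
  \<open>\<mu> = m / (1 - q r)\<close>, and \<open>1 / (1 - q r)\<close> lies between \<open>1\<close> and \<open>1 / (1 - sgn r \<pi>)\<close>.\<close>

lemma inverse_one_minus_between:
  fixes q r \<pi> :: real
  assumes "0 \<le> q" "q \<le> \<pi>" "\<pi> < 1" "\<bar>r\<bar> \<le> 1"
  shows "0 < 1 - q * r"
    and "min 1 (1 / (1 - sgn r * \<pi>)) \<le> 1 / (1 - q * r)"
    and "1 / (1 - q * r) \<le> max 1 (1 / (1 - sgn r * \<pi>))"
proof -
  have "\<bar>q * r\<bar> \<le> \<pi> * 1"
    unfolding abs_mult using assms by (intro mult_mono) auto
  then have qr: "-\<pi> \<le> q * r" "q * r \<le> \<pi>"
    by (auto simp: abs_le_iff)
  then show pos: "0 < 1 - q * r"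
    using \<open>\<pi> < 1\<close> by linarith
  consider "r > 0" | "r = 0" | "r < 0" by linarith
  then have "min 1 (1 / (1 - sgn r * \<pi>)) \<le> 1 / (1 - q * r)
      \<and> 1 / (1 - q * r) \<le> max 1 (1 / (1 - sgn r * \<pi>))"
  proof cases
    case 1
    have "1 \<le> 1 / (1 - q * r)"
      using 1 \<open>0 \<le> q\<close> pos by simp
    moreover have "1 / (1 - q * r) \<le> 1 / (1 - \<pi>)"
      using qr pos \<open>\<pi> < 1\<close> by (intro divide_left_mono) auto
    ultimately show ?thesis using 1 by simp
  next
    case 3
    have "1 / (1 - q * r) \<le> 1"
      using 3 \<open>0 \<le> q\<close> pos by (simp add: mult_nonneg_nonpos)
    moreover have "1 / (1 + \<pi>) \<le> 1 / (1 - q * r)"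
      using qr pos \<open>\<pi> < 1\<close> by (intro divide_left_mono) auto
    ultimately show ?thesis using 3 by simp
  qed simp
  then show "min 1 (1 / (1 - sgn r * \<pi>)) \<le> 1 / (1 - q * r)"
    and "1 / (1 - q * r) \<le> max 1 (1 / (1 - sgn r * \<pi>))"
    by auto
qed

lemma anticipation_bias_factor_bounds:
  fixes q \<pi> \<tau> \<mu> :: real
  assumes "0 \<le> q" "q \<le> \<pi>" "\<pi> < 1" "\<bar>\<tau>\<bar> \<le> \<bar>\<mu>\<bar>"
  shows "\<exists>c. min 1 (1 / (1 - sgn (\<tau> * \<mu>) * \<pi>)) \<le> c
           \<and> c \<le> max 1 (1 / (1 - sgn (\<tau> * \<mu>) * \<pi>)) \<and> \<mu> = (\<mu> - q * \<tau>) * c"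
proof (cases "\<mu> = 0")
  case True
  then show ?thesis
    using assms by (intro exI[of _ 1]) auto
next
  case False
  define r where "r = \<tau> / \<mu>"
  have r: "\<bar>r\<bar> \<le> 1"
    using assms(4) False by (simp add: r_def abs_divide divide_le_eq_1)
  have \<tau>: "\<tau> = r * \<mu>"
    using False by (simp add: r_def)
  have sgn: "sgn (\<tau> * \<mu>) = sgn r"
    using False \<tau> by (simp add: sgn_mult)
  note bounds = inverse_one_minus_between[OF assms(1-3) r]
  have "\<mu> - q * \<tau> = \<mu> * (1 - q * r)"
    using \<tau> by (simp add: algebra_simps)
  then have "\<mu> = (\<mu> - q * \<tau>) * (1 / (1 - q * r))"
    using bounds(1) by simp
  with bounds(2,3) show ?thesis
    unfolding sgn by (intro exI[of _ "1 / (1 - q * r)"] conjI)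
qed

lemma pred_of_bool_measurable:
  fixes d :: "'a \<Rightarrow> bool"
  assumes "(\<lambda>\<omega>. of_bool (d \<omega>) :: real) \<in> borel_measurable M"
  shows "Measurable.pred M d"
proof -
  have "Measurable.pred M (\<lambda>\<omega>. (of_bool (d \<omega>) :: real) = 1)"
    using assms by measurable
  then show ?thesis by simp
qed

lemma unit_vec_measurable_treatment:
  assumes "(\<lambda>\<omega>. unit_vec (y001 \<omega>) (y011 \<omega>) (y00 \<omega>) (y10 \<omega>) (y11 \<omega>) (d \<omega>) (a \<omega>))
             \<in> borel_measurable M"
  shows "Measurable.pred M d" and "Measurable.pred M a"
proof -
  define F where "F = (\<lambda>\<omega>. unit_vec (y001 \<omega>) (y011 \<omega>) (y00 \<omega>) (y10 \<omega>) (y11 \<omega>) (d \<omega>) (a \<omega>))"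
  have F: "F \<in> borel_measurable M"
    using assms by (simp add: F_def)
  have "(\<lambda>\<omega>. fst (snd (snd (snd (snd (snd (F \<omega>))))))) \<in> borel_measurable M"
    using F unfolding borel_prod[symmetric] by measurable
  then have "(\<lambda>\<omega>. of_bool (d \<omega>) :: real) \<in> borel_measurable M"
    by (simp add: F_def unit_vec_def)
  then show "Measurable.pred M d"
    by (rule pred_of_bool_measurable)
  have "(\<lambda>\<omega>. snd (snd (snd (snd (snd (snd (F \<omega>))))))) \<in> borel_measurable M"
    using F unfolding borel_prod[symmetric] by measurable
  then have "(\<lambda>\<omega>. of_bool (a \<omega>) :: real) \<in> borel_measurable M"
    by (simp add: F_def unit_vec_def)
  then show "Measurable.pred M a"
    by (rule pred_of_bool_measurable)
qed

lemma cond_ev_cong: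
  assumes "\<And>\<omega>. \<omega> \<in> space M \<Longrightarrow> P \<omega> \<Longrightarrow> X \<omega> = Y \<omega>"
  shows "cond_ev M X P = cond_ev M Y P"
  unfolding cond_ev_def
  by (rule arg_cong[where f = "\<lambda>I. I / _"], rule Bochner_Integration.integral_cong)
     (auto simp: assms indicator_def)

lemma cond_ev_add:
  assumes "Measurable.pred M P" "integrable M X" "integrable M Y"
  shows "cond_ev M (\<lambda>\<omega>. X \<omega> + Y \<omega>) P = cond_ev M X P + cond_ev M Y P"
proof -
  define S where "S = {\<omega>\<in>space M. P \<omega>}"
  have "S \<in> sets M"
    unfolding S_def using assms(1) by measurable
  then have "integrable M (\<lambda>\<omega>. indicator S \<omega> * X \<omega>)" "integrable M (\<lambda>\<omega>. indicator S \<omega> * Y \<omega>)"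
    using integrable_real_mult_indicator assms(2,3) by (auto simp: mult.commute)
  then show ?thesis
    by (simp add: cond_ev_def S_def[symmetric] distrib_left add_divide_distrib)
qed

lemma cond_ev_diff:
  assumes "Measurable.pred M P" "integrable M X" "integrable M Y"
  shows "cond_ev M (\<lambda>\<omega>. X \<omega> - Y \<omega>) P = cond_ev M X P - cond_ev M Y P"
proof -
  define S where "S = {\<omega>\<in>space M. P \<omega>}"
  have "S \<in> sets M"
    unfolding S_def using assms(1) by measurable
  then have "integrable M (\<lambda>\<omega>. indicator S \<omega> * X \<omega>)" "integrable M (\<lambda>\<omega>. indicator S \<omega> * Y \<omega>)"
    using integrable_real_mult_indicator assms(2,3) by (auto simp: mult.commute)
  then show ?thesis
    by (simp add: cond_ev_def S_def[symmetric] right_diff_distrib diff_divide_distrib)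
qed

lemma cond_prob_mult_cond_ev:
  assumes "Measurable.pred M P" "Measurable.pred M Q" "finite_measure M"
  shows "cond_prob M Q P * cond_ev M X (\<lambda>\<omega>. P \<omega> \<and> Q \<omega>)
       = cond_ev M (\<lambda>\<omega>. if Q \<omega> then X \<omega> else 0) P"
proof -
  define S where "S = {\<omega>\<in>space M. P \<omega> \<and> Q \<omega>}"
  have S: "S \<in> sets M"
    unfolding S_def using assms(1,2) by measurable
  have integrand: "(\<integral>\<omega>. indicator {\<omega>\<in>space M. P \<omega>} \<omega> * (if Q \<omega> then X \<omega> else 0) \<partial>M)
      = (\<integral>\<omega>. indicator S \<omega> * X \<omega> \<partial>M)"
    by (rule Bochner_Integration.integral_cong) (auto simp: S_def indicator_def)
  show ?thesis
  proof (cases "measure M S = 0")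
    case True
    then have "AE \<omega> in M. \<omega> \<notin> S"
      using S assms(3) by (intro AE_I'[of S]) (auto simp: finite_measure.emeasure_eq_measure)
    then have "AE \<omega> in M. indicator S \<omega> * X \<omega> = 0"
      by eventually_elim simp
    then have "(\<integral>\<omega>. indicator S \<omega> * X \<omega> \<partial>M) = 0"
      by (rule integral_eq_zero_AE)
    then show ?thesis
      using True integrand by (simp add: cond_ev_def cond_prob_def S_def conj_commute)
  next
    case False
    then show ?thesis
      using integrand by (simp add: cond_ev_def cond_prob_def S_def conj_commute)
  qed
qed

lemma did_estimand_decomposition:
  fixes g :: "real \<Rightarrow> real" and y001 y011 y00 y10 y11 :: "'a \<Rightarrow> real" and d a :: "'a \<Rightarrow> bool"
  assumes "finite_measure M" "Measurable.pred M d" "Measurable.pred M a"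
    and "integrable M (\<lambda>\<omega>. g (y001 \<omega>))" "integrable M (\<lambda>\<omega>. g (y011 \<omega>))"
      "integrable M (\<lambda>\<omega>. g (y00 \<omega>))" "integrable M (\<lambda>\<omega>. g (y10 \<omega>))" "integrable M (\<lambda>\<omega>. g (y11 \<omega>))"
    and base: "\<And>\<omega>. \<omega> \<in> space M \<Longrightarrow> y00 \<omega> = y001 \<omega>"
  shows "cond_ev M (\<lambda>\<omega>. g (obs_Y1 (d \<omega>) (y11 \<omega>) (y10 \<omega>)) - g (obs_Y0 (d \<omega>) (a \<omega>) (y00 \<omega>) (y001 \<omega>) (y011 \<omega>))) d
       - cond_ev M (\<lambda>\<omega>. g (obs_Y1 (d \<omega>) (y11 \<omega>) (y10 \<omega>)) - g (obs_Y0 (d \<omega>) (a \<omega>) (y00 \<omega>) (y001 \<omega>) (y011 \<omega>))) (\<lambda>\<omega>. \<not> d \<omega>)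
     = cond_ev M (\<lambda>\<omega>. g (y11 \<omega>) - g (y10 \<omega>)) d
       + (cond_ev M (\<lambda>\<omega>. g (y10 \<omega>) - g (y00 \<omega>)) d - cond_ev M (\<lambda>\<omega>. g (y10 \<omega>) - g (y00 \<omega>)) (\<lambda>\<omega>. \<not> d \<omega>))
       - cond_prob M a d * cond_ev M (\<lambda>\<omega>. g (y011 \<omega>) - g (y001 \<omega>)) (\<lambda>\<omega>. d \<omega> \<and> a \<omega>)"
proof -
  define effect where "effect = (\<lambda>\<omega>. g (y11 \<omega>) - g (y10 \<omega>))"
  define trend where "trend = (\<lambda>\<omega>. g (y10 \<omega>) - g (y00 \<omega>))"
  define antic where "antic = (\<lambda>\<omega>. g (y011 \<omega>) - g (y001 \<omega>))"
  define change where "change = (\<lambda>\<omega>. g (obs_Y1 (d \<omega>) (y11 \<omega>) (y10 \<omega>))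
                                   - g (obs_Y0 (d \<omega>) (a \<omega>) (y00 \<omega>) (y001 \<omega>) (y011 \<omega>)))"
  have "integrable M effect" "integrable M trend" "integrable M antic"
    using assms(4-8) by (auto simp: effect_def trend_def antic_def)
  have "{\<omega>\<in>space M. a \<omega>} \<in> sets M"
    using assms(3) by measurable
  then have "integrable M (\<lambda>\<omega>. antic \<omega> * indicator {\<omega>\<in>space M. a \<omega>} \<omega>)"
    using \<open>integrable M antic\<close> by (rule integrable_real_mult_indicator)
  then have "integrable M (\<lambda>\<omega>. if a \<omega> then antic \<omega> else 0)"
    by (rule Bochner_Integration.integrable_cong[THEN iffD1, rotated 2]) (auto simp: indicator_def)
  have "cond_ev M change d = cond_ev M (\<lambda>\<omega>. effect \<omega> + trend \<omega> - (if a \<omega> then antic \<omega> else 0)) d"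
    by (rule cond_ev_cong)
       (auto simp: change_def obs_Y1_def obs_Y0_def effect_def trend_def antic_def base)
  also have "\<dots> = cond_ev M effect d + cond_ev M trend d
      - cond_prob M a d * cond_ev M antic (\<lambda>\<omega>. d \<omega> \<and> a \<omega>)"
    using assms(1-3) \<open>integrable M effect\<close> \<open>integrable M trend\<close>
      \<open>integrable M (\<lambda>\<omega>. if a \<omega> then antic \<omega> else 0)\<close>
    by (simp add: cond_ev_add cond_ev_diff cond_prob_mult_cond_ev)
  finally have "cond_ev M change d = \<dots>" .
  moreover have "cond_ev M change (\<lambda>\<omega>. \<not> d \<omega>) = cond_ev M trend (\<lambda>\<omega>. \<not> d \<omega>)"
    by (rule cond_ev_cong) (auto simp: change_def obs_Y1_def obs_Y0_def trend_def)
  ultimately show ?thesis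
    unfolding change_def effect_def trend_def antic_def by simp
qed

theorem theorem1:
  fixes M :: "'a measure" and n :: nat and g :: "real \<Rightarrow> real" and \<pi> :: real
    and Y0_01 Y0_11 Y0_0 Y1_0 Y1_1 :: "nat \<Rightarrow> 'a \<Rightarrow> real"
    and D A :: "nat \<Rightarrow> 'a \<Rightarrow> bool"
    and i :: nat
  assumes prob: "prob_space M"
    and n: "n \<ge> 1" and i: "i \<in> {1..n}"
    and rv: "\<And>j. j \<in> {1..n} \<Longrightarrow>
        (\<lambda>\<omega>. unit_vec (Y0_01 j \<omega>) (Y0_11 j \<omega>) (Y0_0 j \<omega>) (Y1_0 j \<omega>) (Y1_1 j \<omega>) (D j \<omega>) (A j \<omega>))
          \<in> borel_measurable M"
    \<comment> \<open>(i) sampling: i.i.d. across units\<close>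
    and indep: "prob_space.indep_vars M (\<lambda>_. borel)
        (\<lambda>j \<omega>. unit_vec (Y0_01 j \<omega>) (Y0_11 j \<omega>) (Y0_0 j \<omega>) (Y1_0 j \<omega>) (Y1_1 j \<omega>) (D j \<omega>) (A j \<omega>)) {1..n}"
    and ident: "\<And>j. j \<in> {1..n} \<Longrightarrow>
        distr M borel (\<lambda>\<omega>. unit_vec (Y0_01 j \<omega>) (Y0_11 j \<omega>) (Y0_0 j \<omega>) (Y1_0 j \<omega>) (Y1_1 j \<omega>) (D j \<omega>) (A j \<omega>))
      = distr M borel (\<lambda>\<omega>. unit_vec (Y0_01 1 \<omega>) (Y0_11 1 \<omega>) (Y0_0 1 \<omega>) (Y1_0 1 \<omega>) (Y1_1 1 \<omega>) (D 1 \<omega>) (A 1 \<omega>))"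
    \<comment> \<open>g measurable, integrable on the relevant outcomes\<close>
    and g_meas: "g \<in> borel_measurable borel"
    and int: "\<And>j. j \<in> {1..n} \<Longrightarrow>
        integrable M (\<lambda>\<omega>. g (Y0_01 j \<omega>)) \<and> integrable M (\<lambda>\<omega>. g (Y0_11 j \<omega>)) \<and>
        integrable M (\<lambda>\<omega>. g (Y0_0 j \<omega>)) \<and> integrable M (\<lambda>\<omega>. g (Y1_0 j \<omega>)) \<and>
        integrable M (\<lambda>\<omega>. g (Y1_1 j \<omega>))"
    \<comment> \<open>conditioning events have positive probability\<close>
    and posD1: "measure M {\<omega>\<in>space M. D i \<omega>} > 0"
    and posD0: "measure M {\<omega>\<in>space M. \<not> D i \<omega>} > 0"
    \<comment> \<open>(ii)\<close>
    and no_antic_base: "\<And>j \<omega>. j \<in> {1..n} \<Longrightarrow> \<omega> \<in> space M \<Longrightarrow> Y0_0 j \<omega> = Y0_01 j \<omega>"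
    \<comment> \<open>(iii) parallel trends\<close>
    and PT: "cond_ev M (\<lambda>\<omega>. g (Y1_0 i \<omega>) - g (Y0_0 i \<omega>)) (\<lambda>\<omega>. D i \<omega>)
           = cond_ev M (\<lambda>\<omega>. g (Y1_0 i \<omega>) - g (Y0_0 i \<omega>)) (\<lambda>\<omega>. \<not> D i \<omega>)"
    \<comment> \<open>(iv)\<close>
    and pi: "0 < \<pi>" "\<pi> < 1"
    and antic_bound: "cond_prob M (\<lambda>\<omega>. A i \<omega>) (\<lambda>\<omega>. D i \<omega>) \<le> \<pi>"
    \<comment> \<open>(v)\<close>
    and tau_mu: "\<bar>cond_ev M (\<lambda>\<omega>. g (Y0_11 i \<omega>) - g (Y0_01 i \<omega>)) (\<lambda>\<omega>. D i \<omega> \<and> A i \<omega>)\<bar>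
               \<le> \<bar>cond_ev M (\<lambda>\<omega>. g (Y1_1 i \<omega>) - g (Y1_0 i \<omega>)) (\<lambda>\<omega>. D i \<omega>)\<bar>"
  shows "let \<mu> = cond_ev M (\<lambda>\<omega>. g (Y1_1 i \<omega>) - g (Y1_0 i \<omega>)) (\<lambda>\<omega>. D i \<omega>);
             \<tau> = cond_ev M (\<lambda>\<omega>. g (Y0_11 i \<omega>) - g (Y0_01 i \<omega>)) (\<lambda>\<omega>. D i \<omega> \<and> A i \<omega>);
             Y1 = (\<lambda>\<omega>. obs_Y1 (D i \<omega>) (Y1_1 i \<omega>) (Y1_0 i \<omega>));
             Y0 = (\<lambda>\<omega>. obs_Y0 (D i \<omega>) (A i \<omega>) (Y0_0 i \<omega>) (Y0_01 i \<omega>) (Y0_11 i \<omega>));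
             m = cond_ev M (\<lambda>\<omega>. g (Y1 \<omega>) - g (Y0 \<omega>)) (\<lambda>\<omega>. D i \<omega>)
               - cond_ev M (\<lambda>\<omega>. g (Y1 \<omega>) - g (Y0 \<omega>)) (\<lambda>\<omega>. \<not> D i \<omega>);
             b = 1 / (1 - sgn (\<tau> * \<mu>) * \<pi>)
         in \<exists>c. min 1 b \<le> c \<and> c \<le> max 1 b \<and> \<mu> = m * c"
proof -
  interpret prob_space M by (rule prob)
  have D: "Measurable.pred M (D i)" and A: "Measurable.pred M (A i)"
    using unit_vec_measurable_treatment[OF rv[OF i]] by auto
  define \<mu> where "\<mu> = cond_ev M (\<lambda>\<omega>. g (Y1_1 i \<omega>) - g (Y1_0 i \<omega>)) (D i)"
  define \<tau> where "\<tau> = cond_ev M (\<lambda>\<omega>. g (Y0_11 i \<omega>) - g (Y0_01 i \<omega>)) (\<lambda>\<omega>. D i \<omega> \<and> A i \<omega>)"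
  define q where "q = cond_prob M (A i) (D i)"
  define Y1 where "Y1 = (\<lambda>\<omega>. obs_Y1 (D i \<omega>) (Y1_1 i \<omega>) (Y1_0 i \<omega>))"
  define Y0 where "Y0 = (\<lambda>\<omega>. obs_Y0 (D i \<omega>) (A i \<omega>) (Y0_0 i \<omega>) (Y0_01 i \<omega>) (Y0_11 i \<omega>))"
  have "cond_ev M (\<lambda>\<omega>. g (Y1 \<omega>) - g (Y0 \<omega>)) (D i) - cond_ev M (\<lambda>\<omega>. g (Y1 \<omega>) - g (Y0 \<omega>)) (\<lambda>\<omega>. \<not> D i \<omega>)
      = \<mu> - q * \<tau>"
    using did_estimand_decomposition[of M "D i" "A i" g "Y0_01 i" "Y0_11 i" "Y0_0 i" "Y1_0 i" "Y1_1 i",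
        OF finite_measure_axioms D A]
      int[OF i] no_antic_base[OF i] PT
    unfolding Y1_def Y0_def \<mu>_def \<tau>_def q_def by simp
  moreover have "0 \<le> q" "q \<le> \<pi>"
    using antic_bound by (simp_all add: q_def cond_prob_def)
  ultimately show ?thesis
    using anticipation_bias_factor_bounds[of q \<pi> \<tau> \<mu>] pi tau_mu
    unfolding Let_def Y1_def[symmetric] Y0_def[symmetric] \<mu>_def[symmetric] \<tau>_def[symmetric]
    by simp
qed

end
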